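(* Let $a,b:[0,\infty)\to\mathbb C$ be bounded Lebesgue measurable functions, neither of which vanishes almost everywhere, such that $a$ vanishes almost everywhere outside some bounded interval and $$ t\,a(t)=\int_0^t a(u)\,b(t-u)\,du\quad\text{for almost every } t>0.$$ Then $b$ is not compactly supported up to null sets, i.e. there is no $T>0$ such that $b(t)=0$ for almost every $t>T$. *)

theory Defs
  imports "HOL-Analysis.Analysis"
begin

end

theory Submission
  imports Defs "HOL-Complex_Analysis.Complex_Analysis" "HOL-Probability.Probability"
begin

(* Assume b vanishes a.e. beyond some T.  Replace a and b by Borel
   representatives that are bounded and vanish outside compact intervals [0,S], [0,T]
   ("admissible" functions) and pass to the entire transforms
     A(z) = \<integral> a(t) e^(z t) dt,   B(z) = \<integral> b(t) e^(z t) dt.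
   The transform of t a(t) is A' (expand e^(z t) into its power series) and the transform of
   a convolution is the product of the transforms (Fubini), so the hypothesis becomes the
   differential equation A' = A B; hence A = c e^F for a primitive F of B.
   If c = 0, then A vanishes on the imaginary axis and Fourier uniqueness (Levy's theorem)
   gives a = 0 a.e.  Otherwise the bound |A(z)| \<le> C e^(S |z|) gives Re F(z) \<le> c' + S |z|;
   by a Borel-Caratheodory argument (Schwarz lemma) and Liouville's theorem F is affine, so
   B is constant, the transform B' of t b(t) vanishes, and b = 0 a.e.  Both contradict the
   hypotheses. *)

section \<open>Bounded functions with compact support in [0, \<infinity>)\<close>

definition admissible :: "real \<Rightarrow> (real \<Rightarrow> complex) \<Rightarrow> bool" where
  "admissible R f \<longleftrightarrow> 0 \<le> R \<and> f \<in> borel_measurable borel \<and> (\<exists>K. \<forall>t. norm (f t) \<le> K)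
     \<and> (\<forall>t. t \<notin> {0..R} \<longrightarrow> f t = 0)"

lemma admissibleE:
  assumes "admissible R f"
  obtains K where "0 \<le> R" "0 \<le> K" "\<And>t. norm (f t) \<le> K" "f \<in> borel_measurable borel"
    "\<And>t. t \<notin> {0..R} \<Longrightarrow> f t = 0"
proof -
  obtain K where K: "\<And>t. norm (f t) \<le> K" using assms unfolding admissible_def by auto
  moreover have "0 \<le> K" using norm_ge_zero[of "f 0"] K[of 0] by linarith
  ultimately show ?thesis using that assms unfolding admissible_def by blast
qed

lemma integrable_bounded_Icc:
  fixes f :: "real \<Rightarrow> 'a::{banach, second_countable_topology}"
  assumes "f \<in> borel_measurable borel" and "\<And>t. t \<in> {0..R} \<Longrightarrow> norm (f t) \<le> K"
    and "\<And>t. t \<notin> {0..R} \<Longrightarrow> f t = 0"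
  shows "integrable lborel f"
proof (rule Bochner_Integration.integrable_bound)
  show "integrable lborel (\<lambda>t. indicator {0..R} t * K :: real)"
    by (intro integrable_mult_left integrable_real_indicator) (simp_all add: emeasure_lborel_Icc_eq)
  show "AE t in lborel. norm (f t) \<le> norm (indicator {0..R} t * K :: real)"
    using assms(2,3) by (intro AE_I2) (force simp: indicator_def)
qed (use assms(1) in simp)

lemma norm_integral_bounded_Icc:
  fixes f :: "real \<Rightarrow> 'a::{banach, second_countable_topology}"
  assumes "f \<in> borel_measurable borel" and "\<And>t. t \<in> {0..R} \<Longrightarrow> norm (f t) \<le> K"
    and "\<And>t. t \<notin> {0..R} \<Longrightarrow> f t = 0" and "0 \<le> R"
  shows "norm (integral\<^sup>L lborel f) \<le> R * K"
proof -
  have "norm (integral\<^sup>L lborel f) \<le> (\<integral>t. norm (f t) \<partial>lborel)"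
    by (rule integral_norm_bound)
  also have "\<dots> \<le> (\<integral>t. indicator {0..R} t * K \<partial>lborel)"
  proof (rule integral_mono)
    show "integrable lborel (\<lambda>t. norm (f t))"
      using integrable_bounded_Icc[where R = R and K = K, OF assms(1-3)] by simp
    show "integrable lborel (\<lambda>t. indicator {0..R} t * K :: real)"
      by (intro integrable_mult_left integrable_real_indicator) (simp_all add: emeasure_lborel_Icc_eq)
    show "norm (f t) \<le> indicator {0..R} t * K" for t
      using assms(2,3)[of t] by (cases "t \<in> {0..R}") auto
  qed
  also have "\<dots> = R * K" using assms(4) by simp
  finally show ?thesis .
qed

lemma admissible_integrable_mult:
  assumes "admissible R f" and g: "continuous_on UNIV g"
  shows "integrable lborel (\<lambda>t. f t * g t)"
proof -
  obtain K where K: "0 \<le> K" "\<And>t. norm (f t) \<le> K" and [measurable]: "f \<in> borel_measurable borel"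
    and fz: "\<And>t. t \<notin> {0..R} \<Longrightarrow> f t = 0"
    using admissibleE[OF assms(1)] by metis
  have [measurable]: "g \<in> borel_measurable borel" using g by (rule borel_measurable_continuous_onI)
  obtain B where B: "\<forall>t\<in>{0..R}. norm (g t) \<le> B"
    using compact_imp_bounded[OF compact_continuous_image[OF
          continuous_on_subset[OF g subset_UNIV] compact_Icc[of 0 R]]]
    unfolding bounded_iff by (auto simp: image_iff)
  show ?thesis
  proof (rule integrable_bounded_Icc[where K = "K * B"])
    show "norm (f t * g t) \<le> K * B" if "t \<in> {0..R}" for t
      unfolding norm_mult using that K B by (intro mult_mono) auto
  qed (use fz in auto)
qed

lemma admissible_mult_of_real:
  assumes "admissible R f"
  shows "admissible R (\<lambda>t. of_real t * f t)"
proof -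
  obtain K where K: "0 \<le> R" "0 \<le> K" "\<And>t. norm (f t) \<le> K"
    and [measurable]: "f \<in> borel_measurable borel" and fz: "\<And>t. t \<notin> {0..R} \<Longrightarrow> f t = 0"
    using admissibleE[OF assms] by metis
  have "norm (of_real t * f t) \<le> R * K" for t
  proof (cases "t \<in> {0..R}")
    case True
    then show ?thesis unfolding norm_mult by (intro mult_mono K) auto
  qed (simp add: fz K mult_nonneg_nonneg)
  then show ?thesis using K fz unfolding admissible_def by auto
qed

lemma admissible_cnj:
  assumes "admissible R f"
  shows "admissible R (\<lambda>t. cnj (f t))"
proof -
  have [measurable]: "f \<in> borel_measurable borel" using assms unfolding admissible_def by auto
  have "(\<lambda>t. cnj (f t)) \<in> borel_measurable borel"
    by (rule borel_measurable_continuous_on) (auto intro!: continuous_intros)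
  then show ?thesis using assms unfolding admissible_def by auto
qed

lemma admissible_Re_Im:
  assumes "admissible R f"
  shows "admissible R (\<lambda>t. of_real (Re (f t)))" "admissible R (\<lambda>t. of_real (Im (f t)))"
proof -
  obtain K where K: "0 \<le> R" "\<And>t. norm (f t) \<le> K" "f \<in> borel_measurable borel"
    "\<And>t. t \<notin> {0..R} \<Longrightarrow> f t = 0" using admissibleE[OF assms] by metis
  have "\<bar>Re (f t)\<bar> \<le> K" "\<bar>Im (f t)\<bar> \<le> K" for t
    using K(2)[of t] abs_Re_le_cmod[of "f t"] abs_Im_le_cmod[of "f t"] by linarith+
  then show "admissible R (\<lambda>t. of_real (Re (f t)))" "admissible R (\<lambda>t. of_real (Im (f t)))"
    using K unfolding admissible_def by (auto intro!: exI[of _ K])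
qed

section \<open>The transform \<open>\<integral> f(t) e^(z t) dt\<close>\<close>

text \<open>The Laplace transform with kernel \<open>e^(z t)\<close> (so that it has no sign in the exponent), and
  the moments.  For admissible \<open>f\<close> both integrals exist for all \<open>z\<close>.\<close>

definition laplace :: "(real \<Rightarrow> complex) \<Rightarrow> complex \<Rightarrow> complex" where
  "laplace f z = (\<integral>t. f t * exp (z * of_real t) \<partial>lborel)"

definition moment :: "(real \<Rightarrow> complex) \<Rightarrow> nat \<Rightarrow> complex" where
  "moment f n = (\<integral>t. f t * of_real t ^ n \<partial>lborel)"

lemma laplace_integrable:
  "admissible R f \<Longrightarrow> integrable lborel (\<lambda>t. f t * exp (z * of_real t))"
  by (rule admissible_integrable_mult) (auto intro!: continuous_intros)

lemma norm_exp_kernel_le: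
  fixes z :: complex
  assumes "t \<in> {0..R}"
  shows "norm (exp (z * of_real t)) \<le> exp (norm z * R)"
proof -
  have "Re z * t \<le> norm z * t" using assms by (intro mult_right_mono complex_Re_le_cmod) auto
  also have "\<dots> \<le> norm z * R" using assms by (intro mult_left_mono) auto
  finally show ?thesis by (simp add: norm_exp)
qed

lemma norm_exp_series_term_le:
  fixes z :: complex
  assumes "t \<in> {0..R}"
  shows "norm ((z * of_real t) ^ i / fact i) \<le> (norm z * R) ^ i / fact i"
proof -
  have "norm (z * of_real t) ^ i \<le> (norm z * R) ^ i"
    using assms by (intro power_mono) (auto simp: norm_mult intro!: mult_left_mono)
  then show ?thesis by (simp add: norm_divide norm_power divide_right_mono)
qed

text \<open>Integrating the exponential series term by term (the \<open>i\<close>-th term has integral of norm at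
  most \<open>R K (|z| R)^i / i!\<close>): the transform is the entire power series of the moments.\<close>

lemma laplace_moment_series:
  assumes f: "admissible R f"
  shows "(\<lambda>n. moment f n * z ^ n / fact n) sums laplace f z"
proof -
  obtain K where K: "0 \<le> R" "0 \<le> K" "\<And>t. norm (f t) \<le> K"
    and [measurable]: "f \<in> borel_measurable borel" and fz: "\<And>t. t \<notin> {0..R} \<Longrightarrow> f t = 0"
    using admissibleE[OF f] by metis
  define F where "F i t = f t * ((z * of_real t) ^ i / fact i)" for i t
  have F_int: "integrable lborel (F i)" for i
    unfolding F_def by (rule admissible_integrable_mult[OF f]) (auto intro!: continuous_intros)
  have norm_F: "norm (F i t) = norm (f t) * (norm (z * of_real t) ^ i / fact i)" for i t
    unfolding F_def by (simp add: norm_mult norm_divide norm_power)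
  have F_sums: "(\<lambda>i. F i t) sums (f t * exp (z * of_real t))" for t
    unfolding F_def using sums_mult[OF exp_converges[of "z * of_real t"], of "f t"]
    by (simp add: scaleR_conv_of_real divide_inverse mult_ac)
  have F_abs_summable: "summable (\<lambda>i. norm (F i t))" for t
    unfolding norm_F using sums_mult[OF exp_converges[of "norm (z * of_real t)"], of "norm (f t)"]
    by (auto simp: sums_iff scaleR_conv_of_real divide_inverse mult_ac)
  have F_bound: "(\<integral>t. norm (F i t) \<partial>lborel) \<le> R * (K * ((norm z * R) ^ i / fact i))" for i
  proof -
    have "(\<integral>t. norm (F i t) \<partial>lborel) \<le> norm (\<integral>t. norm (F i t) \<partial>lborel)" by simp
    also have "\<dots> \<le> R * (K * ((norm z * R) ^ i / fact i))"
    proof (rule norm_integral_bounded_Icc)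
      show "norm (norm (F i t)) \<le> K * ((norm z * R) ^ i / fact i)" if "t \<in> {0..R}" for t
        using norm_exp_series_term_le[OF that, of z i] K
        unfolding F_def real_norm_def norm_mult abs_mult abs_norm_cancel by (intro mult_mono) auto
      show "(\<lambda>t. norm (F i t)) \<in> borel_measurable borel" unfolding F_def by measurable
    qed (use fz K in \<open>auto simp: F_def\<close>)
    finally show ?thesis .
  qed
  have "summable (\<lambda>i. \<integral>t. norm (F i t) \<partial>lborel)"
  proof (rule summable_comparison_test)
    show "summable (\<lambda>i. R * (K * ((norm z * R) ^ i / fact i)))"
      by (intro summable_mult) (use summable_exp[of "norm z * R"] in \<open>simp add: divide_inverse mult.commute\<close>)
  qed (use F_bound in auto)
  then have "(\<lambda>i. integral\<^sup>L lborel (F i)) sums (\<integral>t. (\<Sum>i. F i t) \<partial>lborel)"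
    by (intro sums_integral[OF F_int]) (simp_all add: F_abs_summable)
  moreover have "(\<Sum>i. F i t) = f t * exp (z * of_real t)" for t
    using F_sums[of t] by (simp add: sums_iff)
  moreover have "integral\<^sup>L lborel (F i) = moment f i * z ^ i / fact i" for i
  proof -
    have "F i = (\<lambda>t. (z ^ i / fact i) * (f t * of_real t ^ i))"
      unfolding F_def by (auto simp: power_mult_distrib)
    then show ?thesis unfolding moment_def by (simp only: integral_mult_right_zero) simp
  qed
  ultimately show ?thesis by (simp add: laplace_def)
qed

text \<open>Differentiating the power series: the derivative of the transform is the transform of
  \<open>t f(t)\<close>.\<close>

lemma laplace_has_derivative:
  assumes f: "admissible R f"
  shows "(laplace f has_field_derivative laplace (\<lambda>t. of_real t * f t) z) (at z)"
proof -
  define c where "c n = moment f n / fact n" for n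
  have laplace_eq: "laplace f = (\<lambda>z. \<Sum>n. c n * z ^ n)"
    using laplace_moment_series[OF f] by (auto simp: c_def sums_iff fun_eq_iff)
  have summable_c: "summable (\<lambda>n. c n * y ^ n)" for y
    using laplace_moment_series[OF f, of y] by (auto simp: c_def sums_iff)
  have "diffs c n * z ^ n = moment (\<lambda>t. of_real t * f t) n * z ^ n / fact n" for n
  proof -
    have "moment (\<lambda>t. of_real t * f t) n = moment f (Suc n)"
      unfolding moment_def by (simp add: mult_ac)
    moreover have "(of_nat (Suc n) :: complex) * (x / fact (Suc n)) = x / fact n" for x
      by (simp only: fact_Suc of_nat_mult) (simp add: divide_simps del: of_nat_Suc)
    ultimately show ?thesis unfolding diffs_def c_def by simp
  qed
  then have "(\<Sum>n. diffs c n * z ^ n) = laplace (\<lambda>t. of_real t * f t) z"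
    using laplace_moment_series[OF admissible_mult_of_real[OF f], of z] by (simp add: sums_iff)
  with termdiffs_strong_converges_everywhere[of c z, OF summable_c] show ?thesis
    by (simp add: laplace_eq)
qed

lemma laplace_holomorphic: "admissible R f \<Longrightarrow> laplace f holomorphic_on UNIV"
  using laplace_has_derivative by (auto simp: holomorphic_on_open)

lemma laplace_exponential_type:
  assumes f: "admissible R f"
  obtains C where "0 < C" "\<And>z. norm (laplace f z) \<le> C * exp (R * norm z)"
proof -
  obtain K where K: "0 \<le> R" "0 \<le> K" "\<And>t. norm (f t) \<le> K"
    and [measurable]: "f \<in> borel_measurable borel" and fz: "\<And>t. t \<notin> {0..R} \<Longrightarrow> f t = 0"
    using admissibleE[OF f] by metis
  have "norm (laplace f z) \<le> (R * K + 1) * exp (R * norm z)" for z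
  proof -
    have "norm (laplace f z) \<le> R * (K * exp (R * norm z))"
      unfolding laplace_def
    proof (rule norm_integral_bounded_Icc)
      show "norm (f t * exp (z * of_real t)) \<le> K * exp (R * norm z)" if "t \<in> {0..R}" for t
        using norm_exp_kernel_le[OF that, of z] K unfolding norm_mult
        by (intro mult_mono) (auto simp: mult.commute)
    qed (use fz K in auto)
    also have "\<dots> \<le> (R * K + 1) * exp (R * norm z)" by (simp add: algebra_simps)
    finally show ?thesis .
  qed
  moreover have "0 < R * K + 1" using mult_nonneg_nonneg[OF K(1,2)] by linarith
  ultimately show ?thesis using that by blast
qed

lemma laplace_linear:
  assumes "admissible R f" "admissible R g"
  shows "laplace (\<lambda>t. c * f t + d * g t) z = c * laplace f z + d * laplace g z"
proof -
  have "laplace (\<lambda>t. c * f t + d * g t) z =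
     (\<integral>t. c * (f t * exp (z * of_real t)) + d * (g t * exp (z * of_real t)) \<partial>lborel)"
    unfolding laplace_def by (simp add: algebra_simps)
  also have "\<dots> = c * laplace f z + d * laplace g z"
    unfolding laplace_def using laplace_integrable[OF assms(1)] laplace_integrable[OF assms(2)]
    by simp
  finally show ?thesis .
qed

lemma laplace_cnj_imaginary:
  "laplace (\<lambda>t. cnj (f t)) (\<i> * of_real y) = cnj (laplace f (\<i> * of_real (- y)))"
proof -
  have "laplace (\<lambda>t. cnj (f t)) (\<i> * of_real y) =
      (\<integral>t. cnj (f t * exp (\<i> * of_real (- y) * of_real t)) \<partial>lborel)"
    unfolding laplace_def by (intro Bochner_Integration.integral_cong) (auto simp: exp_cnj)
  also have "\<dots> = cnj (laplace f (\<i> * of_real (- y)))"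
    unfolding laplace_def
    using Bochner_Integration.integral_cnj[of lborel "\<lambda>t. f t * exp (\<i> * of_real (- y) * of_real t)"]
    by (simp del: complex_cnj_mult)
  finally show ?thesis .
qed

lemma laplace_shift: "laplace (\<lambda>t. f (t - u)) z = exp (z * of_real u) * laplace f z"
proof -
  have "laplace f z = (\<integral>t. f (- u + 1 * t) * exp (z * of_real (- u + 1 * t)) \<partial>lborel)"
    unfolding laplace_def
    using lborel_integral_real_affine[where c = 1 and t = "- u" and f = "\<lambda>v. f v * exp (z * of_real v)"]
    by simp
  also have "\<dots> = (\<integral>t. exp (- (z * of_real u)) * (f (t - u) * exp (z * of_real t)) \<partial>lborel)"
    by (intro Bochner_Integration.integral_cong) (auto simp: exp_diff exp_minus field_simps)
  also have "\<dots> = exp (- (z * of_real u)) * laplace (\<lambda>t. f (t - u)) z"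
    unfolding laplace_def by (rule integral_mult_right_zero)
  finally show ?thesis by (simp add: exp_minus field_simps)
qed

text \<open>The integrand of the convolution theorem is integrable on the plane: it is bounded and
  vanishes outside the rectangle \<open>[0, S] \<times> [0, S + T]\<close>.\<close>

lemma convolution_integrand_integrable:
  assumes a: "admissible S a" and b: "admissible T b"
  shows "integrable (lborel \<Otimes>\<^sub>M lborel) (\<lambda>(u, t). a u * b (t - u) * exp (z * of_real t))"
proof -
  obtain Ka where Ka: "0 \<le> S" "0 \<le> Ka" "\<And>t. norm (a t) \<le> Ka"
    and [measurable]: "a \<in> borel_measurable borel" and az: "\<And>t. t \<notin> {0..S} \<Longrightarrow> a t = 0"
    using admissibleE[OF a] by metis
  obtain Kb where Kb: "0 \<le> T" "0 \<le> Kb" "\<And>t. norm (b t) \<le> Kb"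
    and [measurable]: "b \<in> borel_measurable borel" and bz: "\<And>t. t \<notin> {0..T} \<Longrightarrow> b t = 0"
    using admissibleE[OF b] by metis
  define E where "E = exp (norm z * (S + T))"
  have bound: "norm (a u * b (t - u) * exp (z * of_real t))
      \<le> indicator ({0..S} \<times> {0..S+T}) (u, t) * (Ka * Kb * E)" for u t
  proof (cases "u \<in> {0..S} \<and> t - u \<in> {0..T}")
    case True
    then have "t \<in> {0..S + T}" by auto
    then have "norm (exp (z * of_real t)) \<le> E" unfolding E_def by (rule norm_exp_kernel_le)
    then show ?thesis unfolding norm_mult using True Ka Kb by (auto intro!: mult_mono)
  next
    case False
    then show ?thesis using az bz Ka Kb by (auto simp: E_def)
  qed
  show ?thesis
  proof (rule Bochner_Integration.integrable_bound)
    show "integrable (lborel \<Otimes>\<^sub>M lborel)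
        (\<lambda>x. indicator ({0..S} \<times> {0..S+T}) x * (Ka * Kb * E) :: real)"
      by (intro integrable_mult_left integrable_real_indicator)
         (auto simp: lborel.emeasure_pair_measure_Times emeasure_lborel_Icc_eq ennreal_mult_less_top)
  qed (use bound Ka Kb in \<open>auto intro!: AE_I2 simp: abs_mult E_def\<close>)
qed

text \<open>Convolution theorem: the transform of \<open>\<integral> a(u) b(t - u) du\<close> is the product of the
  transforms (Fubini, then a translation in the inner integral).\<close>

lemma laplace_convolution:
  assumes a: "admissible S a" and b: "admissible T b"
  shows "laplace (\<lambda>t. \<integral>u. a u * b (t - u) \<partial>lborel) z = laplace a z * laplace b z"
proof -
  define f where "f u t = a u * b (t - u) * exp (z * of_real t)" for u t
  have inner: "(\<integral>t. f u t \<partial>lborel) = a u * (exp (z * of_real u) * laplace b z)" for u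
    using laplace_shift[of b u z]
    unfolding laplace_def f_def by (simp add: mult.assoc integral_mult_right_zero)
  have "laplace (\<lambda>t. \<integral>u. a u * b (t - u) \<partial>lborel) z = (\<integral>t. (\<integral>u. f u t \<partial>lborel) \<partial>lborel)"
    unfolding laplace_def f_def by (simp add: integral_mult_left_zero)
  also have "\<dots> = (\<integral>u. (\<integral>t. f u t \<partial>lborel) \<partial>lborel)"
    using convolution_integrand_integrable[OF a b, of z]
    unfolding f_def by (intro lborel_pair.Fubini_integral) (simp add: case_prod_beta')
  also have "\<dots> = (\<integral>u. a u * exp (z * of_real u) \<partial>lborel) * laplace b z"
    unfolding inner mult.assoc[symmetric] by (rule integral_mult_left_zero)
  also have "\<dots> = laplace a z * laplace b z" by (simp add: laplace_def)
  finally show ?thesis .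
qed

section \<open>Fourier uniqueness\<close>

lemma real_distribution_normalised_density:
  fixes h :: "real \<Rightarrow> real"
  assumes [measurable]: "h \<in> borel_measurable borel" and "integrable lborel h"
    and "\<And>t. 0 \<le> h t" and "0 < m" and "integral\<^sup>L lborel h = m"
  shows "real_distribution (density lborel (\<lambda>t. ennreal (h t / m)))"
proof -
  have "emeasure (density lborel (\<lambda>t. ennreal (h t / m))) UNIV = (\<integral>\<^sup>+t. ennreal (h t / m) \<partial>lborel)"
    by (simp add: emeasure_density)
  also have "\<dots> = ennreal (\<integral>t. h t / m \<partial>lborel)"
    by (rule nn_integral_eq_integral) (use assms in auto)
  also have "\<dots> = 1" using assms by simp
  finally have "prob_space (density lborel (\<lambda>t. ennreal (h t / m)))"
    by (intro prob_spaceI) simp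
  then show ?thesis by (intro real_distribution.intro real_distribution_axioms.intro) auto
qed

lemma char_normalised_density:
  fixes h :: "real \<Rightarrow> real"
  assumes [measurable]: "h \<in> borel_measurable borel" and "\<And>t. 0 \<le> h t" and "0 < m"
  shows "char (density lborel (\<lambda>t. ennreal (h t / m))) y
           = laplace (\<lambda>t. of_real (h t)) (\<i> * of_real y) / m"
proof -
  have "char (density lborel (\<lambda>t. ennreal (h t / m))) y = (\<integral>t. (h t / m) *\<^sub>R iexp (y * t) \<partial>lborel)"
    unfolding char_def by (rule integral_density) (use assms in auto)
  also have "\<dots> = (\<integral>t. of_real (h t) * exp (\<i> * of_real y * of_real t) / m \<partial>lborel)"
    by (intro Bochner_Integration.integral_cong) (auto simp: scaleR_conv_of_real mult_ac)
  also have "\<dots> = laplace (\<lambda>t. of_real (h t)) (\<i> * of_real y) / m"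
    unfolding laplace_def by (rule integral_divide_zero)
  finally show ?thesis .
qed

text \<open>Two nonnegative integrable functions with the same Fourier transform agree a.e.
  (Levy's uniqueness theorem for characteristic functions).\<close>

lemma nonneg_fourier_unique:
  fixes g h :: "real \<Rightarrow> real"
  assumes [measurable]: "g \<in> borel_measurable borel" "h \<in> borel_measurable borel"
    and int: "integrable lborel g" "integrable lborel h"
    and nonneg: "\<And>t. 0 \<le> g t" "\<And>t. 0 \<le> h t"
    and fourier: "\<And>y. laplace (\<lambda>t. of_real (g t)) (\<i> * of_real y)
                      = laplace (\<lambda>t. of_real (h t)) (\<i> * of_real y)"
  shows "AE t in lborel. g t = h t"
proof -
  define m where "m = integral\<^sup>L lborel g"
  have mass: "integral\<^sup>L lborel h = m"
    using fourier[of 0] by (simp add: m_def laplace_def)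
  have "0 \<le> m" unfolding m_def by (rule integral_nonneg_AE) (simp add: nonneg)
  then consider "m = 0" | "0 < m" by linarith
  then show ?thesis
  proof cases
    case 1
    have "AE t in lborel. g t = 0"
      using 1 unfolding m_def by (simp add: integral_nonneg_eq_0_iff_AE[OF int(1)] nonneg)
    moreover have "AE t in lborel. h t = 0"
      using 1 mass by (simp add: integral_nonneg_eq_0_iff_AE[OF int(2)] nonneg)
    ultimately show ?thesis by eventually_elim simp
  next
    case 2
    define M where "M f = density lborel (\<lambda>t. ennreal (f t / m))" for f :: "real \<Rightarrow> real"
    have "M g = M h" unfolding M_def
    proof (rule Levy_uniqueness)
      show "real_distribution (density lborel (\<lambda>t. ennreal (g t / m)))"
        by (rule real_distribution_normalised_density) (use int nonneg 2 in \<open>simp_all add: m_def\<close>)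
      show "real_distribution (density lborel (\<lambda>t. ennreal (h t / m)))"
        by (rule real_distribution_normalised_density) (use int nonneg 2 mass in simp_all)
      show "char (density lborel (\<lambda>t. ennreal (g t / m))) = char (density lborel (\<lambda>t. ennreal (h t / m)))"
        using 2 nonneg by (simp add: fun_eq_iff char_normalised_density fourier)
    qed
    then have "AE t in lborel. ennreal (g t / m) = ennreal (h t / m)" unfolding M_def
      using int(1) nonneg 2 by (subst (asm) finite_density_unique) (auto simp: nn_integral_eq_integral)
    then show ?thesis
      by eventually_elim (use 2 nonneg in \<open>simp add: ennreal_inj\<close>)
  qed
qed

text \<open>A real admissible function whose transform vanishes on the imaginary axis vanishes a.e.:
  apply the previous lemma to its positive and negative parts.\<close>

lemma fourier_unique_real:
  fixes g :: "real \<Rightarrow> real"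
  assumes g: "admissible R (\<lambda>t. of_real (g t))"
    and zero: "\<And>y. laplace (\<lambda>t. of_real (g t)) (\<i> * of_real y) = 0"
  shows "AE t in lborel. g t = 0"
proof -
  obtain K where K: "0 \<le> R" "0 \<le> K" "\<And>t. \<bar>g t\<bar> \<le> K"
    and g_meas: "(\<lambda>t. complex_of_real (g t)) \<in> borel_measurable borel"
    and gz: "\<And>t. t \<notin> {0..R} \<Longrightarrow> g t = 0"
    using admissibleE[OF g] by (metis norm_of_real of_real_eq_0_iff)
  have [measurable]: "g \<in> borel_measurable borel"
    using measurable_compose[OF g_meas borel_measurable_Re] by simp
  define gp where "gp t = max (g t) 0" for t
  define gn where "gn t = max (- g t) 0" for t
  have [measurable]: "gp \<in> borel_measurable borel" "gn \<in> borel_measurable borel"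
    unfolding gp_def gn_def by measurable
  have adm: "admissible R (\<lambda>t. of_real (gp t))" "admissible R (\<lambda>t. of_real (gn t))"
    unfolding admissible_def using K gz by (auto simp: gp_def gn_def abs_le_iff)
  have parts: "(\<lambda>t. of_real (g t)) = (\<lambda>t. 1 * of_real (gp t) + (- 1) * complex_of_real (gn t))"
    by (auto simp: fun_eq_iff gp_def gn_def max_def)
  have "laplace (\<lambda>t. of_real (gp t)) (\<i> * of_real y)
           = laplace (\<lambda>t. of_real (gn t)) (\<i> * of_real y)" for y
    using zero[of y] laplace_linear[OF adm, of 1 "- 1" "\<i> * of_real y"] unfolding parts by simp
  then have "AE t in lborel. gp t = gn t"
    by (intro nonneg_fourier_unique integrable_bounded_Icc[where K = K and R = R])
       (use K gz in \<open>auto simp: gp_def gn_def abs_le_iff\<close>)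
  then show ?thesis by eventually_elim (auto simp: gp_def gn_def max_def split: if_splits)
qed

text \<open>The complex case: real and imaginary parts are combinations of \<open>f\<close> and \<open>cnj f\<close>, whose
  transforms both vanish on the imaginary axis.\<close>

lemma fourier_unique:
  assumes f: "admissible R f" and zero: "\<And>y. laplace f (\<i> * of_real y) = 0"
  shows "AE t in lborel. f t = 0"
proof -
  have f': "admissible R (\<lambda>t. cnj (f t))" by (rule admissible_cnj[OF f])
  have zero_cnj: "laplace (\<lambda>t. cnj (f t)) (\<i> * of_real y) = 0" for y
    using zero[of "- y"] by (simp add: laplace_cnj_imaginary)
  have combination_zero: "laplace (\<lambda>t. c * f t + d * cnj (f t)) (\<i> * of_real y) = 0" for c d y
    using zero[of y] zero_cnj[of y] by (simp add: laplace_linear[OF f f'])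
  have Re_eq: "(\<lambda>t. of_real (Re (f t))) = (\<lambda>t. (1/2) * f t + (1/2) * cnj (f t))"
    and Im_eq: "(\<lambda>t. of_real (Im (f t))) = (\<lambda>t. (1/(2*\<i>)) * f t + (-1/(2*\<i>)) * cnj (f t))"
    by (auto simp: fun_eq_iff complex_eq_iff)
  have "AE t in lborel. Re (f t) = 0"
    by (rule fourier_unique_real[OF admissible_Re_Im(1)[OF f]]) (simp only: Re_eq combination_zero)
  moreover have "AE t in lborel. Im (f t) = 0"
    by (rule fourier_unique_real[OF admissible_Re_Im(2)[OF f]]) (simp only: Im_eq combination_zero)
  ultimately show ?thesis by eventually_elim (simp add: complex_eq_iff)
qed

section \<open>Entire functions whose real part grows at most linearly\<close>

lemma norm_less_norm_reflect:
  fixes u :: complex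
  assumes "Re u < M" "0 < M"
  shows "norm u < norm (2 * of_real M - u)"
proof -
  have "norm u ^ 2 < norm (2 * of_real M - u) ^ 2"
    using assms unfolding cmod_power2 by (simp add: power2_eq_square algebra_simps)
  then show ?thesis by (rule power_less_imp_less_base) simp
qed

text \<open>On the disc of radius \<open>2|z|\<close>, the map \<open>G / (2M - G)\<close> sends
  the disc into the unit disc and fixes 0, so the Schwarz lemma applies.\<close>

lemma entire_linear_growth_of_re_bound:
  fixes G :: "complex \<Rightarrow> complex"
  assumes hol: "G holomorphic_on UNIV" and G0: "G 0 = 0"
    and re: "\<And>z. Re (G z) \<le> c + d * norm z" and c0: "0 \<le> c" and d0: "0 \<le> d"
  shows "norm (G z) \<le> 2 * c + 2 + 4 * d * norm z"
proof (cases "z = 0")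
  case True then show ?thesis using G0 c0 by simp
next
  case False
  define R where "R = 2 * norm z"
  define M where "M = c + d * R + 1"
  have R0: "0 < R" using False by (simp add: R_def)
  have M0: "0 < M" using c0 mult_nonneg_nonneg[OF d0 less_imp_le[OF R0]] by (simp add: M_def)
  define h where "h w = G (of_real R * w) / (2 * of_real M - G (of_real R * w))" for w
  have lt: "norm (G (of_real R * w)) < norm (2 * of_real M - G (of_real R * w))"
    if "norm w < 1" for w
  proof (rule norm_less_norm_reflect[OF _ M0])
    have "Re (G (of_real R * w)) \<le> c + d * norm (of_real R * w)" by (rule re)
    also have "\<dots> \<le> c + d * R" using that R0 d0
      by (auto simp: norm_mult intro!: mult_left_mono mult_le_one)
    finally show "Re (G (of_real R * w)) < M" by (simp add: M_def)
  qed
  have den: "2 * of_real M - G (of_real R * w) \<noteq> 0" if "norm w < 1" for w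
    using lt[OF that] by auto
  have h_hol: "h holomorphic_on ball 0 1"
    unfolding h_def using den
    by (intro holomorphic_intros holomorphic_on_compose_gen[where g=G,
          OF _ holomorphic_on_subset[OF hol], unfolded o_def]) auto
  have h_lt: "norm (h w) < 1" if "norm w < 1" for w
    unfolding h_def using lt[OF that] den[OF that] by (simp add: norm_divide divide_less_eq)
  define xi where "xi = z / of_real R"
  have xi: "norm xi = 1/2" "of_real R * xi = z" using R0 by (simp_all add: xi_def R_def norm_divide)
  have h_xi: "norm (h xi) \<le> 1/2"
    using Schwarz_Lemma(1)[OF h_hol _ h_lt, of xi] xi by (simp add: h_def G0)
  have "G z * (1 + h xi) = 2 * of_real M * h xi"
    using den[of xi] xi by (simp add: h_def field_simps)
  then have "norm (G z) * norm (1 + h xi) = 2 * M * norm (h xi)"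
    using M0 by (metis norm_mult norm_of_real abs_of_pos norm_numeral mult.assoc)
  also have "\<dots> \<le> 2 * M * norm (1 + h xi)"
    using h_xi M0 norm_triangle_ineq2[of 1 "- h xi"] by (intro mult_left_mono) auto
  finally have "norm (G z) * norm (1 + h xi) \<le> 2 * M * norm (1 + h xi)" .
  moreover have "0 < norm (1 + h xi)" using h_xi norm_triangle_ineq2[of 1 "- h xi"] by auto
  ultimately have "norm (G z) \<le> 2 * M" by (rule mult_right_le_imp_le)
  then show ?thesis by (simp add: M_def R_def algebra_simps)
qed

text \<open>Consequently such a function is linear (polynomial Liouville theorem).\<close>

lemma entire_linear_of_re_bound:
  fixes G :: "complex \<Rightarrow> complex"
  assumes hol: "G holomorphic_on UNIV" and G0: "G 0 = 0"
    and re: "\<And>z. Re (G z) \<le> c + d * norm z" and c0: "0 \<le> c" and d0: "0 \<le> d"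
  shows "G z = deriv G 0 * z"
proof -
  have "G z = (\<Sum>k\<le>1. (deriv^^k) G 0 / fact k * z ^ k)"
  proof (rule Liouville_polynomial[OF hol, of 1 "2 * c + 2 + 4 * d"])
    fix w :: complex assume w: "1 \<le> norm w"
    have "norm (G w) \<le> 2 * c + 2 + 4 * d * norm w"
      by (rule entire_linear_growth_of_re_bound[OF hol G0 re c0 d0])
    also have "\<dots> \<le> (2 * c + 2) * norm w + 4 * d * norm w"
      using w c0 by (intro add_right_mono) (simp add: mult_le_cancel_left1)
    finally show "norm (G w) \<le> (2 * c + 2 + 4 * d) * norm w ^ 1" by (simp add: algebra_simps)
  qed
  then show ?thesis using G0 by simp
qed

lemma entire_affine_of_exp_exponential_type:
  fixes F :: "complex \<Rightarrow> complex"
  assumes hol: "F holomorphic_on UNIV" and "0 < C" and "0 \<le> S"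
    and bound: "\<And>z. norm (exp (F z)) \<le> C * exp (S * norm z)"
  obtains q where "\<And>z. F z = F 0 + q * z"
proof -
  define c where "c = max 0 (ln C - Re (F 0))"
  have re_F: "Re (F z) \<le> ln C + S * norm z" for z
    using bound[of z] \<open>0 < C\<close> by (simp add: norm_exp ln_le_cancel_iff[symmetric] ln_mult)
  have re: "Re (F z - F 0) \<le> c + S * norm z" for z
    using re_F[of z] max.cobounded2[of 0 "ln C - Re (F 0)"] unfolding c_def by simp
  have "F z - F 0 = deriv (\<lambda>z. F z - F 0) 0 * z" for z
    by (rule entire_linear_of_re_bound[OF _ _ re]) (use hol \<open>0 \<le> S\<close> in \<open>auto simp: c_def intro!: holomorphic_intros\<close>)
  then show ?thesis using that by (metis add.commute diff_add_cancel)
qed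

section \<open>The differential equation \<open>A' = A B\<close>\<close>

lemma solution_of_linear_ode:
  fixes A B F :: "complex \<Rightarrow> complex"
  assumes dA: "\<And>z. (A has_field_derivative A z * B z) (at z)"
    and dF: "\<And>z. (F has_field_derivative B z) (at z)"
  obtains c where "\<And>z. A z = c * exp (F z)"
proof -
  have "\<exists>c. \<forall>z\<in>UNIV. A z * exp (- F z) = c"
  proof (rule has_field_derivative_zero_constant)
    fix z :: complex
    have "((\<lambda>z. A z * exp (- F z)) has_field_derivative
        (A z * B z) * exp (- F z) + exp (- F z) * (- B z) * A z) (at z)"
      by (rule DERIV_mult[OF dA DERIV_fun_exp[OF DERIV_minus[OF dF]]])
    then show "((\<lambda>z. A z * exp (- F z)) has_field_derivative 0) (at z within UNIV)"
      by (simp add: algebra_simps)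
  qed simp
  then obtain c where "\<And>z. A z * exp (- F z) = c" by auto
  then have "A z = c * exp (F z)" for z
    by (metis exp_minus_inverse mult.assoc mult.right_neutral)
  then show ?thesis using that by blast
qed

lemma laplace_ode_dichotomy:
  assumes a: "admissible S a" and b: "admissible T b"
    and ode: "\<And>z. laplace (\<lambda>t. of_real t * a t) z = laplace a z * laplace b z"
  shows "(AE t in lborel. a t = 0) \<or> (AE t in lborel. b t = 0)"
proof -
  obtain F where dF: "\<And>z. (F has_field_derivative laplace b z) (at z)"
    using holomorphic_convex_primitive'[of UNIV "laplace b"] laplace_holomorphic[OF b] by auto
  have dA: "(laplace a has_field_derivative laplace a z * laplace b z) (at z)" for z
    using laplace_has_derivative[OF a, of z] by (simp add: ode)
  obtain c where A: "\<And>z. laplace a z = c * exp (F z)"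
    using solution_of_linear_ode[OF dA dF] by blast
  show ?thesis
  proof (cases "c = 0")
    case True
    then have "AE t in lborel. a t = 0" by (intro fourier_unique[OF a]) (simp add: A)
    then show ?thesis ..
  next
    case False
    obtain C where C: "0 < C" "\<And>z. norm (laplace a z) \<le> C * exp (S * norm z)"
      using laplace_exponential_type[OF a] by blast
    have S0: "0 \<le> S" using a by (simp add: admissible_def)
    have bound: "norm (exp (F z)) \<le> C / norm c * exp (S * norm z)" for z
      using C(2)[of z] False by (simp add: A norm_mult field_simps)
    have hol: "F holomorphic_on UNIV" using dF by (auto simp: holomorphic_on_open)
    have "0 < C / norm c" using C(1) False by simp
    then obtain q where "\<And>z. F z = F 0 + q * z"
      using entire_affine_of_exp_exponential_type[OF hol _ S0 bound] by blast
    then have F_affine: "(\<lambda>z. F 0 + q * z) = F" by (intro ext) (rule sym)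
    have "((\<lambda>z. F 0 + q * z) has_field_derivative q) (at z)" for z
      by (auto intro!: derivative_eq_intros)
    then have "laplace b = (\<lambda>_. q)"
      using dF unfolding F_affine by (auto intro: DERIV_unique)
    then have "(laplace b has_field_derivative 0) (at z)" for z by simp
    then have "laplace (\<lambda>t. of_real t * b t) z = 0" for z
      by (rule DERIV_unique[OF laplace_has_derivative[OF b]])
    then have "AE t in lborel. of_real t * b t = 0"
      by (intro fourier_unique[OF admissible_mult_of_real[OF b]])
    then have "AE t in lborel. b t = 0"
      using AE_lborel_singleton[of 0] by eventually_elim auto
    then show ?thesis ..
  qed
qed

section \<open>Admissible representatives of the data\<close>

text \<open>Complex version of the library fact that a function measurable for the completion agrees
  a.e. with a measurable one.\<close>

lemma completion_ex_borel_measurable_complex: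
  fixes f :: "'a \<Rightarrow> complex"
  assumes f: "f \<in> borel_measurable (completion M)"
  shows "\<exists>g\<in>borel_measurable M. AE x in M. f x = g x"
proof -
  have re: "(\<lambda>x. Re (f x)) \<in> borel_measurable (completion M)"
    and im: "(\<lambda>x. Im (f x)) \<in> borel_measurable (completion M)"
    using f by (simp_all only: borel_measurable_complex_iff)
  obtain g1 where g1: "g1 \<in> borel_measurable M" "AE x in M. Re (f x) = g1 x"
    using completion_ex_borel_measurable_real[OF re] by blast
  obtain g2 where g2: "g2 \<in> borel_measurable M" "AE x in M. Im (f x) = g2 x"
    using completion_ex_borel_measurable_real[OF im] by blast
  have "(\<lambda>x. Complex (g1 x) (g2 x)) \<in> borel_measurable M"
    using g1(1) g2(1) by (subst borel_measurable_complex_iff) simp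
  moreover have "AE x in M. f x = Complex (g1 x) (g2 x)"
    using g1(2) g2(2) by eventually_elim (simp add: complex_eq_iff)
  ultimately show ?thesis by (intro bexI[of _ "\<lambda>x. Complex (g1 x) (g2 x)"])
qed

lemma admissible_representative:
  fixes f :: "real \<Rightarrow> complex"
  assumes meas: "set_borel_measurable lebesgue {0..} f"
    and bound: "\<forall>t\<ge>0. norm (f t) \<le> M"
    and vanish: "AE t in lebesgue. t \<ge> 0 \<longrightarrow> t > R \<longrightarrow> f t = 0"
  obtains g where "admissible (max R 0) g" "AE t in lborel. t \<ge> 0 \<longrightarrow> f t = g t"
proof -
  obtain f2 where f2_meas: "f2 \<in> borel_measurable lborel"
    and f2: "AE t in lborel. indicator {0..} t *\<^sub>R f t = f2 t"
    using completion_ex_borel_measurable_complex[OF meas[unfolded set_borel_measurable_def]] by blast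
  have [measurable]: "f2 \<in> borel_measurable borel" using f2_meas by simp
  define g where "g t = (if t \<in> {0..max R 0} \<and> norm (f2 t) \<le> M then f2 t else 0)" for t
  have "g \<in> borel_measurable borel" unfolding g_def by measurable
  moreover have "\<forall>t. norm (g t) \<le> max M 0" unfolding g_def by auto
  moreover have "\<forall>t. t \<notin> {0..max R 0} \<longrightarrow> g t = 0" unfolding g_def by auto
  ultimately have "admissible (max R 0) g" unfolding admissible_def by auto
  moreover have "AE t in lborel. t \<ge> 0 \<longrightarrow> f t = g t"
    using f2 vanish[unfolded AE_completion_iff]
  proof eventually_elim
    case (elim t)
    then show ?case using bound by (cases "t \<le> R") (auto simp: g_def)
  qed
  ultimately show ?thesis using that by blast
qed

lemma AE_lborel_reflect:
  fixes P :: "real \<Rightarrow> bool"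
  assumes "AE v in lborel. P v"
  shows "AE u in lborel. P (t - u)"
proof -
  obtain N where N: "{v \<in> space lborel. \<not> P v} \<subseteq> N" "N \<in> null_sets lborel"
    using assms unfolding eventually_ae_filter by blast
  have "AE v in lborel. v \<notin> N" using N(2) by (rule AE_not_in)
  then have "AE u in lborel. t + (- 1) * u \<notin> N"
    using N(2) by (intro AE_borel_affine) auto
  then show ?thesis by (rule eventually_mono) (use N(1) in auto)
qed

lemma interval_convolution_eq:
  fixes a b a' b' :: "real \<Rightarrow> complex"
  assumes a': "admissible S a'" and b': "admissible T b'"
    and a_eq: "AE t in lborel. t \<ge> 0 \<longrightarrow> a t = a' t"
    and b_eq: "AE t in lborel. t \<ge> 0 \<longrightarrow> b t = b' t" and "0 < t"
  shows "interval_lebesgue_integral lebesgue 0 (ereal t) (\<lambda>u. a u * b (t - u))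
           = (\<integral>u. a' u * b' (t - u) \<partial>lborel)"
proof -
  have [measurable]: "a' \<in> borel_measurable borel" "b' \<in> borel_measurable borel"
    and a'z: "\<And>u. u < 0 \<Longrightarrow> a' u = 0" and b'z: "\<And>u. u < 0 \<Longrightarrow> b' u = 0"
    using a' b' unfolding admissible_def by auto
  define g where "g u = indicator {0<..<t} u *\<^sub>R (a u * b (t - u))" for u
  define k where "k u = a' u * b' (t - u)" for u
  have [measurable]: "k \<in> borel_measurable lborel" unfolding k_def by measurable
  have "AE u in lborel. g u = k u"
    using AE_lborel_reflect[OF b_eq, of t] a_eq AE_lborel_singleton[of 0] AE_lborel_singleton[of t]
    by eventually_elim (auto simp: g_def k_def a'z b'z not_less indicator_def)
  then have ae: "AE u in lebesgue. k u = g u" by (simp add: AE_completion_iff eq_commute)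
  have k_meas: "k \<in> borel_measurable lebesgue" by (rule measurable_completion) simp
  have "interval_lebesgue_integral lebesgue 0 (ereal t) (\<lambda>u. a u * b (t - u)) = integral\<^sup>L lebesgue g"
  proof -
    have "einterval 0 (ereal t) = {0<..<t}" by (auto simp: einterval_def)
    then show ?thesis
      using \<open>0 < t\<close> unfolding interval_lebesgue_integral_def set_lebesgue_integral_def g_def
      by simp
  qed
  also have "\<dots> = integral\<^sup>L lebesgue k"
    using ae by (intro integral_cong_AE borel_measurable_AE[OF k_meas ae] k_meas) (auto elim: eventually_mono)
  also have "\<dots> = integral\<^sup>L lborel k" by (rule integral_completion) simp
  finally show ?thesis by (simp add: k_def[abs_def])
qed

lemma transformed_convolution_equation:
  fixes a b a' b' :: "real \<Rightarrow> complex"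
  assumes a': "admissible S a'" and b': "admissible T b'"
    and a_eq: "AE t in lborel. t \<ge> 0 \<longrightarrow> a t = a' t"
    and b_eq: "AE t in lborel. t \<ge> 0 \<longrightarrow> b t = b' t"
    and conv: "AE t in lebesgue. t > 0 \<longrightarrow>
      of_real t * a t = interval_lebesgue_integral lebesgue 0 (ereal t) (\<lambda>u. a u * b (t - u))"
  shows "laplace (\<lambda>t. of_real t * a' t) z = laplace a' z * laplace b' z"
proof -
  have [measurable]: "a' \<in> borel_measurable borel" "b' \<in> borel_measurable borel"
    and a'z: "\<And>u. u < 0 \<Longrightarrow> a' u = 0" and b'z: "\<And>u. u < 0 \<Longrightarrow> b' u = 0"
    using a' b' unfolding admissible_def by auto
  have "AE t in lborel. of_real t * a' t = (\<integral>u. a' u * b' (t - u) \<partial>lborel)"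
    using conv[unfolded AE_completion_iff] a_eq AE_lborel_singleton[of 0]
  proof eventually_elim
    case (elim t)
    show ?case
    proof (cases "t > 0")
      case True
      then show ?thesis using elim interval_convolution_eq[OF a' b' a_eq b_eq] by simp
    next
      case False
      then have "t < 0" using elim by simp
      then have "a' u * b' (t - u) = 0" for u using a'z b'z by (cases "u < 0") auto
      then have "(\<lambda>u. a' u * b' (t - u)) = (\<lambda>u. 0)" by (rule ext)
      then show ?thesis using a'z[OF \<open>t < 0\<close>] by simp
    qed
  qed
  then have "laplace (\<lambda>t. of_real t * a' t) z = laplace (\<lambda>t. \<integral>u. a' u * b' (t - u) \<partial>lborel) z"
    unfolding laplace_def by (intro integral_cong_AE) (auto elim: eventually_mono)
  also have "\<dots> = laplace a' z * laplace b' z" by (rule laplace_convolution[OF a' b'])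
  finally show ?thesis .
qed

lemma AE_vanish_of_representative:
  assumes "AE t in lborel. t \<ge> 0 \<longrightarrow> f t = g t" and "AE t in lborel. g t = 0"
  shows "AE t in lebesgue. t \<ge> 0 \<longrightarrow> f t = 0"
  using assms unfolding AE_completion_iff by eventually_elim auto

theorem corollary2p3:
  fixes a b :: "real \<Rightarrow> complex"
  assumes a_meas: "set_borel_measurable lebesgue {0..} a"
    and b_meas: "set_borel_measurable lebesgue {0..} b"
    and a_bdd: "\<exists>M. \<forall>t\<ge>0. norm (a t) \<le> M"
    and b_bdd: "\<exists>M. \<forall>t\<ge>0. norm (b t) \<le> M"
    and a_nz: "\<not> (AE t in lebesgue. t \<ge> 0 \<longrightarrow> a t = 0)"
    and b_nz: "\<not> (AE t in lebesgue. t \<ge> 0 \<longrightarrow> b t = 0)"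
    and a_supp: "\<exists>T. AE t in lebesgue. t \<ge> 0 \<longrightarrow> t > T \<longrightarrow> a t = 0"
    and conv: "AE t in lebesgue. t > 0 \<longrightarrow>
                 complex_of_real t * a t = interval_lebesgue_integral lebesgue 0 (ereal t) (\<lambda>u. a u * b (t - u))"
  shows "\<not> (\<exists>T>0. AE t in lebesgue. t > T \<longrightarrow> b t = 0)"
proof
  assume "\<exists>T>0. AE t in lebesgue. t > T \<longrightarrow> b t = 0"
  then obtain T where "AE t in lebesgue. t > T \<longrightarrow> b t = 0" by blast
  then have b_supp: "AE t in lebesgue. t \<ge> 0 \<longrightarrow> t > T \<longrightarrow> b t = 0"
    by (rule eventually_mono) simp
  obtain S where a_supp': "AE t in lebesgue. t \<ge> 0 \<longrightarrow> t > S \<longrightarrow> a t = 0"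
    using a_supp by blast
  obtain a' where a': "admissible (max S 0) a'" "AE t in lborel. t \<ge> 0 \<longrightarrow> a t = a' t"
    using a_bdd admissible_representative[OF a_meas _ a_supp'] by blast
  obtain b' where b': "admissible (max T 0) b'" "AE t in lborel. t \<ge> 0 \<longrightarrow> b t = b' t"
    using b_bdd admissible_representative[OF b_meas _ b_supp] by blast
  have "laplace (\<lambda>t. of_real t * a' t) z = laplace a' z * laplace b' z" for z
    by (rule transformed_convolution_equation[OF a'(1) b'(1) a'(2) b'(2) conv])
  then have "(AE t in lborel. a' t = 0) \<or> (AE t in lborel. b' t = 0)"
    by (rule laplace_ode_dichotomy[OF a'(1) b'(1)])
  then show False
    using AE_vanish_of_representative[OF a'(2)] AE_vanish_of_representative[OF b'(2)] a_nz b_nz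
    by blast
qed

end
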